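(* Let $w$ be a positive integer, $x$ an integer with $0\le x\le p-1$, and $h$ a non-negative integer. If $T_n(x)\equiv x\pmod{p^w}$ and $T'_n(x)\equiv 1\pmod{p^w}$, then $T'_n(x+hp)\equiv T'_n(x)\pmod{p^{w+1}}$ and, for every integer $m\ge 2$, $$\frac{T^{(m)}_n(x+hp)\,p^m}{m!}\equiv 0\pmod{p^{w+2}}.$$
   Context: $p$ is a prime with $p>3$ and $n>1$ is an integer with $\gcd(n,p)=\gcd(n,p^2-1)=1$. $T_n(x)\in\mathbb{Z}[x]$ is the Chebyshev polynomial of the first kind: $T_0=1$, $T_1=x$, $T_d=2xT_{d-1}-T_{d-2}$. $T^{(m)}_n$ is its $m$-th derivative, $T'_n=T^{(1)}_n$; note $T^{(m)}_n(a)/m!\in\mathbb{Z}$ for integers $a$. *)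

theory Defs
  imports "HOL-Computational_Algebra.Polynomial" "HOL-Number_Theory.Cong"
begin

fun cheb :: "nat \<Rightarrow> int poly" where
  "cheb 0 = 1"
| "cheb (Suc 0) = [:0, 1:]"
| "cheb (Suc (Suc d)) = [:0, 2:] * cheb (Suc d) - cheb d"

definition cheb_deriv :: "nat \<Rightarrow> nat \<Rightarrow> int poly" where
  "cheb_deriv m n = (pderiv ^^ m) (cheb n)"

end

theory Submission
  imports Defs
begin

text \<open>
  Put R_b(t) = T_n(b + p t); its t^m-coefficient is p^m T_n^(m)(b) / m!. The heart of the
  proof is that for the given x all coefficients of R_x of degree m >= 2 are divisible by
  p^(w+2). Since R_(x+hp)(t) = R_x(t + h), this survives the shift by h, while the linear
  coefficient p T_n'(.) changes only by a multiple of p^(w+2).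

  If 1 - x^2 is a unit mod p, the Pell-type identity (x^2 - 1) T_n'^2 = n^2 (T_n^2 - 1) gives
  n^2 = 1 mod p^w, and then the differentiated Chebyshev equation
  (1 - x^2) T^(k+2) = (2k+1) x T^(k+1) - (n^2 - k^2) T^(k) shows p^w | T^(m)(x) for m >= 2;
  since p >= 5 we have v_p(m!) <= m - 2, which is enough. Otherwise x = 1 or x = p - 1, and at
  s = +-1 the equation degenerates to (2k+1) T^(k+1)(s) = s (n^2 - k^2) T^(k)(s), so n^2 - 1
  divides (2m-1)!! T^(m)(s). Here n^2 = 1 mod p^w follows from T_n'(+-1) = n^2 (n is odd)
  by running the shift argument once for every power of p.
\<close>

section \<open>Taylor coefficients of linear substitutions\<close>

lemma higher_pderiv_pcompose_linear:
  fixes P :: "'a::idom poly"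
  shows "(pderiv ^^ m) (pcompose P [:b, c:]) = smult (c^m) (pcompose ((pderiv ^^ m) P) [:b, c:])"
  by (induction m) (simp_all add: pderiv_smult pderiv_pcompose pderiv_pCons mult.commute)

lemma fact_mult_coeff_pcompose_linear:
  fixes P :: "'a::{idom, ring_char_0} poly"
  shows "fact m * coeff (pcompose P [:b, c:]) m = c^m * poly ((pderiv ^^ m) P) b"
proof -
  have "fact m * coeff (pcompose P [:b, c:]) m = coeff ((pderiv ^^ m) (pcompose P [:b, c:])) 0"
    by (simp add: coeff_higher_pderiv pochhammer_fact)
  also have "\<dots> = c^m * poly ((pderiv ^^ m) P) b"
    by (simp add: higher_pderiv_pcompose_linear poly_0_coeff_0[symmetric] poly_pcompose)
  finally show ?thesis .
qed

lemma coeff_pcompose_linear_int: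
  fixes P :: "int poly"
  shows "coeff (pcompose P [:b, c:]) m = poly ((pderiv ^^ m) P) b div fact m * c^m"
proof -
  have taylor: "poly ((pderiv ^^ m) P) b = fact m * coeff (pcompose P [:b, 1:]) m"
    using fact_mult_coeff_pcompose_linear[of m P b 1] by simp
  have "fact m * coeff (pcompose P [:b, c:]) m = fact m * (coeff (pcompose P [:b, 1:]) m * c^m)"
    using fact_mult_coeff_pcompose_linear[of m P b c] taylor by (simp add: algebra_simps)
  then show ?thesis
    using taylor by simp
qed

lemma pcompose_linear_shift:
  fixes P :: "'a::idom poly"
  shows "pcompose (pcompose P [:b, c:]) [:h, 1:] = pcompose P [:b + h * c, c:]"
proof -
  have "pcompose [:b, c:] [:h, 1:] = [:b + h * c, c:]"
    by (simp add: pcompose_pCons algebra_simps)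
  then show ?thesis
    by (metis pcompose_assoc)
qed

lemma poly_eq_linear_plus_smult:
  fixes R :: "int poly"
  assumes "\<forall>j\<ge>2. d dvd coeff R j"
  obtains S where "R = [:coeff R 0, coeff R 1:] + smult d (pCons 0 (pCons 0 S))"
proof -
  have "[:d:] dvd poly_shift 2 R"
    using assms by (simp add: const_poly_dvd_iff coeff_poly_shift)
  then obtain S where S: "poly_shift 2 R = smult d S"
    by (auto elim: dvdE)
  have "R = [:coeff R 0, coeff R 1:] + pCons 0 (pCons 0 (poly_shift 2 R))"
  proof (rule poly_eqI)
    fix j
    consider "j = 0" | "j = 1" | i where "j = Suc (Suc i)"
      by (metis One_nat_def not0_implies_Suc)
    then show "coeff R j = coeff ([:coeff R 0, coeff R 1:] + pCons 0 (pCons 0 (poly_shift 2 R))) j"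
      by cases (simp_all add: coeff_poly_shift numeral_2_eq_2)
  qed
  then show ?thesis
    using that S by simp
qed

lemma coeff_pcompose_shift_dvd:
  fixes R :: "int poly"
  assumes "\<forall>j\<ge>2. d dvd coeff R j"
  shows "\<forall>j\<ge>2. d dvd coeff (pcompose R [:h, 1:]) j"
    and "[coeff (pcompose R [:h, 1:]) 1 = coeff R 1] (mod d)"
proof -
  obtain S where S: "R = [:coeff R 0, coeff R 1:] + smult d (pCons 0 (pCons 0 S))"
    using poly_eq_linear_plus_smult[OF assms] .
  define q where "q = [:h, 1:]"
  have shifted: "pcompose R q = [:coeff R 0 + coeff R 1 * h, coeff R 1:] + smult d (q * (q * pcompose S q))"
    by (subst S) (simp add: pcompose_add pcompose_pCons pcompose_smult q_def algebra_simps)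
  show "\<forall>j\<ge>2. d dvd coeff (pcompose R [:h, 1:]) j"
  proof (intro allI impI)
    fix j :: nat
    assume "j \<ge> 2"
    then obtain i where "j = Suc (Suc i)"
      by (metis add_2_eq_Suc le_Suc_ex)
    then show "d dvd coeff (pcompose R [:h, 1:]) j"
      unfolding shifted[unfolded q_def] by simp
  qed
  show "[coeff (pcompose R [:h, 1:]) 1 = coeff R 1] (mod d)"
    unfolding shifted[unfolded q_def] by (simp add: cong_iff_dvd_diff)
qed

lemma pcompose_linear_shift_dvd:
  fixes P :: "int poly"
  assumes dvd: "\<forall>j\<ge>2. d dvd coeff (pcompose P [:b, c:]) j"
  shows "\<forall>j\<ge>2. d dvd coeff (pcompose P [:b + h * c, c:]) j"
    and "[c * poly (pderiv P) (b + h * c) = c * poly (pderiv P) b] (mod d)"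
proof -
  have coeff_1: "coeff (pcompose P [:a, c:]) 1 = c * poly (pderiv P) a" for a
    using fact_mult_coeff_pcompose_linear[of 1 P a c] by simp
  show "\<forall>j\<ge>2. d dvd coeff (pcompose P [:b + h * c, c:]) j"
    using coeff_pcompose_shift_dvd(1)[OF dvd, of h] by (simp only: pcompose_linear_shift)
  show "[c * poly (pderiv P) (b + h * c) = c * poly (pderiv P) b] (mod d)"
    using coeff_pcompose_shift_dvd(2)[OF dvd, of h] by (simp only: pcompose_linear_shift coeff_1)
qed

lemma cong_cmult_left_cancel:
  fixes a b c m :: int
  assumes "c \<noteq> 0" and "[c * a = c * b] (mod c * m)"
  shows "[a = b] (mod m)"
  using assms by (simp add: cong_iff_dvd_diff flip: right_diff_distrib)

section \<open>Prime powers dividing factorials\<close>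

lemma fact_double_int: "(fact (2*m) :: int) = 2^m * fact m * (\<Prod>j<m. of_nat (2*j+1))"
proof (induction m)
  case (Suc m)
  have "(fact (2 * Suc m) :: int) = of_nat (2*m+2) * (of_nat (2*m+1) * fact (2*m))"
    by (simp add: fact_Suc algebra_simps)
  also have "\<dots> = 2^Suc m * fact (Suc m) * (\<Prod>j<Suc m. of_nat (2*j+1))"
    unfolding Suc.IH by (simp add: fact_Suc algebra_simps)
  finally show ?case .
qed simp

lemma multiplicity_fact_div:
  fixes p :: nat
  assumes p: "prime p"
  shows "multiplicity p (fact k :: nat) = k div p + multiplicity p (fact (k div p) :: nat)"
proof (induction k)
  case (Suc k)
  have fact_Suc_k: "multiplicity p (fact (Suc k) :: nat) = multiplicity p (Suc k) + multiplicity p (fact k :: nat)"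
    using prime_elem_multiplicity_mult_distrib[of p "Suc k" "fact k"] p by (simp add: fact_Suc)
  show ?case
  proof (cases "p dvd Suc k")
    case False
    then have "multiplicity p (Suc k) = 0" and "Suc k div p = k div p"
      by (simp_all add: not_dvd_imp_multiplicity_0 div_Suc dvd_eq_mod_eq_0)
    then show ?thesis
      using fact_Suc_k Suc.IH by simp
  next
    case True
    define q where "q = Suc k div p"
    have Suc_k: "Suc k = p * q"
      using True by (simp add: q_def)
    have div_k: "k div p = q - 1"
      using True by (simp add: q_def div_Suc dvd_eq_mod_eq_0)
    have q0: "q > 0"
      using Suc_k by (cases q) auto
    have "multiplicity p (Suc k) = Suc (multiplicity p q)"
      unfolding Suc_k using q0 p by (intro multiplicity_times_same) (auto simp: prime_gt_1_nat)
    moreover have "multiplicity p (fact q :: nat) = multiplicity p q + multiplicity p (fact (q - 1) :: nat)"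
      using prime_elem_multiplicity_mult_distrib[of p q "fact (q - 1)"] p q0
      by (simp add: fact_reduce)
    ultimately show ?thesis
      using fact_Suc_k Suc.IH div_k q0 by (simp add: q_def)
  qed
qed simp

lemma multiplicity_fact_less:
  fixes p :: nat
  assumes p: "prime p"
  shows "k > 0 \<Longrightarrow> (p - 1) * multiplicity p (fact k :: nat) < k"
proof (induction k rule: less_induct)
  case (less k)
  define q where "q = k div p"
  show ?case
  proof (cases "q = 0")
    case True
    then show ?thesis
      using multiplicity_fact_div[OF p, of k] less.prems by (simp add: q_def)
  next
    case False
    have "q < k"
      unfolding q_def using prime_gt_1_nat[OF p] less.prems by (intro div_less_dividend) simp_all
    then have IH: "(p - 1) * multiplicity p (fact q :: nat) < q"
      using less.IH False by blast
    have "(p - 1) * multiplicity p (fact k :: nat) = (p - 1) * q + (p - 1) * multiplicity p (fact q :: nat)"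
      using multiplicity_fact_div[OF p, of k] by (simp add: q_def algebra_simps)
    also have "\<dots> < (p - 1) * q + q"
      using IH by simp
    also have "\<dots> = p * q"
      using p prime_gt_0_nat[OF p] by (simp add: algebra_simps)
    also have "\<dots> \<le> k"
      by (simp add: q_def)
    finally show ?thesis .
  qed
qed

lemma prime_power_dvd_mult_cancel:
  fixes P :: "'a::factorial_semiring"
  assumes P: "prime P" and dvd: "P ^ (a + b) dvd F * c" and F: "F \<noteq> 0" and not_dvd: "\<not> P ^ Suc b dvd F"
  shows "P ^ a dvd c"
proof (cases "c = 0")
  case False
  have "a + b \<le> multiplicity P (F * c)"
    using dvd F False P by (simp add: power_dvd_iff_le_multiplicity not_prime_unit)
  also have "\<dots> = multiplicity P F + multiplicity P c"
    using P F False by (simp add: prime_elem_multiplicity_mult_distrib)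
  finally have "a + b \<le> multiplicity P F + multiplicity P c" .
  moreover have "multiplicity P F \<le> b"
    using not_dvd multiplicity_dvd'[of "Suc b" P F] by linarith
  ultimately show ?thesis
    by (intro multiplicity_dvd') simp
qed simp

lemma prime_power_dvd_of_fact_mult:
  fixes p :: nat and c :: int
  assumes p: "prime p" "p > 3" and m: "m \<ge> 2" and k: "0 < k" "k \<le> 2 * m"
    and dvd: "int p ^ (e + m) dvd fact k * c"
  shows "int p ^ (e + 2) dvd c"
proof -
  have "odd p"
    using prime_odd_nat[OF p(1)] p(2) by simp
  then have "4 \<le> p - 1"
    using p(2) by presburger
  then have "4 * multiplicity p (fact k :: nat) \<le> (p - 1) * multiplicity p (fact k :: nat)"
    by (intro mult_right_mono) simp_all
  also have "\<dots> < k"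
    using multiplicity_fact_less[OF p(1) k(1)] .
  also have "\<dots> \<le> 2 * m"
    by (rule k(2))
  finally have "multiplicity p (fact k :: nat) < Suc (m - 2)"
    using m by linarith
  then have "\<not> p ^ Suc (m - 2) dvd (fact k :: nat)"
    using power_dvd_iff_le_multiplicity[of "fact k :: nat" p "Suc (m - 2)"] prime_gt_1_nat[OF p(1)]
    by simp
  then have not_dvd: "\<not> int p ^ Suc (m - 2) dvd fact k"
    by (metis int_dvd_int_iff of_nat_fact of_nat_power)
  have "(e + 2) + (m - 2) = e + m"
    using m by simp
  then have "int p ^ ((e + 2) + (m - 2)) dvd fact k * c"
    using dvd by (simp only:)
  from prime_power_dvd_mult_cancel[OF _ this _ not_dvd] show ?thesis
    using p(1) by simp
qed

lemma odd_if_coprime_square_minus_one: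
  fixes n p :: nat
  assumes "odd p" and "coprime n (p^2 - 1)"
  shows "odd n"
proof
  assume "even n"
  moreover have "even (p^2 - 1)"
    using assms(1) by (simp add: even_diff_nat)
  ultimately show False
    using assms(2) by (metis coprime_common_divisor odd_one)
qed

section \<open>Chebyshev polynomials\<close>

text \<open>An opaque name for \<open>[:0, 1:]\<close>: otherwise the simplifier turns \<open>X * q\<close> into
  \<open>pCons 0 q\<close>, and ring normalisation of the Chebyshev identities no longer works.\<close>

definition X :: "int poly" where "X = [:0, 1:]"

lemma poly_X [simp]: "poly X a = a"
  by (simp add: X_def)

lemma pderiv_X [simp]: "pderiv X = 1"
  by (simp add: X_def pderiv_pCons)

lemma cheb_Suc_0: "cheb (Suc 0) = X"
  by (simp add: X_def)

lemma cheb_Suc_Suc: "cheb (Suc (Suc d)) = 2 * X * cheb (Suc d) - cheb d"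
  by (simp add: X_def numeral_poly)

declare cheb.simps(2,3) [simp del]
declare cheb_Suc_0 [simp]

lemma poly_cheb_one: "poly (cheb n) 1 = 1"
  by (induction n rule: cheb.induct) (simp_all add: cheb_Suc_Suc)

lemma poly_cheb_minus_one: "poly (cheb n) (-1) = (-1) ^ n"
  by (induction n rule: cheb.induct) (simp_all add: cheb_Suc_Suc)

lemma pderiv_cheb_Suc_Suc:
  "pderiv (cheb (Suc (Suc d))) = 2 * cheb (Suc d) + 2 * X * pderiv (cheb (Suc d)) - pderiv (cheb d)"
  by (simp add: cheb_Suc_Suc pderiv_mult pderiv_diff algebra_simps)

lemma pderiv_cheb_Suc_identity:
  "(1 - X^2) * pderiv (cheb (Suc n)) = of_nat (Suc n) * (cheb n - X * cheb (Suc n))"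
proof (induction n rule: cheb.induct)
  case 1
  then show ?case by (simp add: X_def pderiv_pCons algebra_simps power2_eq_square numeral_poly)
next
  case 2
  then show ?case by (simp add: cheb_Suc_Suc pderiv_mult pderiv_diff algebra_simps power2_eq_square)
next
  case (3 d)
  have "(1 - X^2) * pderiv (cheb (Suc (Suc (Suc d)))) =
      2 * (1 - X^2) * cheb (Suc (Suc d)) + 2 * X * ((1 - X^2) * pderiv (cheb (Suc (Suc d))))
      - (1 - X^2) * pderiv (cheb (Suc d))"
    by (simp add: pderiv_cheb_Suc_Suc[of "Suc d"] algebra_simps)
  also have "\<dots> = of_nat (Suc (Suc (Suc d))) * (cheb (Suc (Suc d)) - X * cheb (Suc (Suc (Suc d))))"
    by (simp only: 3) (simp add: cheb_Suc_Suc[of "Suc d"] cheb_Suc_Suc[of d] algebra_simps power2_eq_square)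
  finally show ?case .
qed

lemma cheb_ode:
  "(1 - X^2) * pderiv (pderiv (cheb n)) - X * pderiv (cheb n) + of_nat (n^2) * cheb n = 0"
proof (induction n rule: cheb.induct)
  case (3 d)
  have d2: "pderiv (pderiv (cheb (Suc (Suc d)))) =
      4 * pderiv (cheb (Suc d)) + 2 * X * pderiv (pderiv (cheb (Suc d))) - pderiv (pderiv (cheb d))"
    unfolding pderiv_cheb_Suc_Suc[of d] by (simp add: pderiv_mult pderiv_diff pderiv_add algebra_simps)
  have "(1 - X^2) * pderiv (pderiv (cheb (Suc (Suc d)))) - X * pderiv (cheb (Suc (Suc d)))
      + of_nat ((Suc (Suc d))^2) * cheb (Suc (Suc d)) =
      2 * X * ((1 - X^2) * pderiv (pderiv (cheb (Suc d))) - X * pderiv (cheb (Suc d))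
        + of_nat ((Suc d)^2) * cheb (Suc d))
      - ((1 - X^2) * pderiv (pderiv (cheb d)) - X * pderiv (cheb d) + of_nat (d^2) * cheb d)
      + 4 * ((1 - X^2) * pderiv (cheb (Suc d)) - of_nat (Suc d) * (cheb d - X * cheb (Suc d)))"
    unfolding d2 by (simp only: pderiv_cheb_Suc_Suc[of d]) (simp add: cheb_Suc_Suc[of d] algebra_simps power2_eq_square)
  then show ?case
    using 3 pderiv_cheb_Suc_identity[of d] by simp
qed simp_all

lemma higher_pderiv_cheb_ode:
  "(1 - X^2) * (pderiv ^^ (k+2)) (cheb n) - of_nat (2*k+1) * X * (pderiv ^^ (k+1)) (cheb n)
     + (of_nat (n^2) - of_nat (k^2)) * (pderiv ^^ k) (cheb n) = 0"
proof (induction k)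
  case 0
  then show ?case using cheb_ode[of n] by (simp add: numeral_2_eq_2)
next
  case (Suc k)
  let ?D = "\<lambda>j. (pderiv ^^ j) (cheb n)"
  have D_Suc: "\<And>j. ?D (Suc j) = pderiv (?D j)"
    by simp
  have "pderiv ((1 - X^2) * ?D (k+2) - of_nat (2*k+1) * X * ?D (k+1) + (of_nat (n^2) - of_nat (k^2)) * ?D k) =
      (1 - X^2) * ?D (Suc k + 2) - of_nat (2 * Suc k + 1) * X * ?D (Suc k + 1)
      + (of_nat (n^2) - of_nat ((Suc k)^2)) * ?D (Suc k)"
    by (simp add: D_Suc pderiv_mult pderiv_diff pderiv_add power2_eq_square algebra_simps del: funpow.simps)
  then show ?case using Suc by simp
qed

lemma poly_higher_pderiv_cheb_ode:
  "(1 - a^2) * poly ((pderiv ^^ (k+2)) (cheb n)) a =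
     of_nat (2*k+1) * a * poly ((pderiv ^^ (k+1)) (cheb n)) a
     - (int n^2 - int k^2) * poly ((pderiv ^^ k) (cheb n)) a"
  using arg_cong[OF higher_pderiv_cheb_ode[of k n], of "\<lambda>P. poly P a"]
  by (simp add: algebra_simps of_nat_poly)

lemma poly_pderiv_cheb_one: "poly (pderiv (cheb n)) 1 = int n^2"
  using poly_higher_pderiv_cheb_ode[of 1 0 n] by (simp add: poly_cheb_one)

lemma poly_pderiv_cheb_minus_one: "poly (pderiv (cheb n)) (-1) = (-1) ^ Suc n * int n^2"
  using poly_higher_pderiv_cheb_ode[of "-1" 0 n] by (simp add: poly_cheb_minus_one mult_ac minus_equation_iff)

lemma cheb_pell:
  "(a^2 - 1) * poly (pderiv (cheb n)) a ^ 2 = int n^2 * (poly (cheb n) a ^ 2 - 1)"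
proof -
  define F where "F = (X^2 - 1) * pderiv (cheb n) ^ 2 - of_nat (n^2) * (cheb n ^ 2 - 1)"
  have "pderiv F = - 2 * pderiv (cheb n) *
      ((1 - X^2) * pderiv (pderiv (cheb n)) - X * pderiv (cheb n) + of_nat (n^2) * cheb n)"
    unfolding F_def by (simp add: pderiv_mult pderiv_diff pderiv_add pderiv_power power2_eq_square algebra_simps)
  then have "degree F = 0"
    using cheb_ode[of n] by (simp add: pderiv_eq_0_iff)
  then have "poly F a = poly F 1"
    by (metis degree_0_id poly_pCons poly_0 mult_zero_right add_0_right)
  also have "poly F 1 = 0"
    by (simp add: F_def poly_cheb_one)
  finally show ?thesis
    by (simp add: F_def of_nat_poly)
qed

section \<open>Taylor coefficients of Chebyshev polynomials modulo prime powers\<close>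

lemma cheb_fixed_point_cong:
  assumes cop: "coprime (1 - x^2) q"
    and fixed: "[poly (cheb n) x = x] (mod q)" and deriv: "[poly (pderiv (cheb n)) x = 1] (mod q)"
  shows "[int n^2 = 1] (mod q)"
proof -
  have cop': "coprime (x^2 - 1) q"
    using cop coprime_minus_left_iff[of "1 - x^2" q] by simp
  have "[(x^2 - 1) * 1 ^ 2 = (x^2 - 1) * poly (pderiv (cheb n)) x ^ 2] (mod q)"
    by (intro cong_mult cong_pow cong_sym[OF deriv] cong_refl)
  also have "(x^2 - 1) * poly (pderiv (cheb n)) x ^ 2 = int n^2 * (poly (cheb n) x ^ 2 - 1)"
    by (rule cheb_pell)
  also have "[\<dots> = int n^2 * (x^2 - 1)] (mod q)"
    by (intro cong_mult cong_diff cong_pow fixed cong_refl)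
  finally have "[(x^2 - 1) * 1 = (x^2 - 1) * int n^2] (mod q)"
    by (simp add: mult.commute)
  then have "[1 = int n^2] (mod q)"
    by (simp only: cong_mult_lcancel[OF cop'])
  then show ?thesis
    by (rule cong_sym)
qed

lemma cheb_higher_pderiv_dvd_at_fixed_point:
  assumes cop: "coprime (1 - x^2) q"
    and fixed: "[poly (cheb n) x = x] (mod q)" and deriv: "[poly (pderiv (cheb n)) x = 1] (mod q)"
  shows "k \<ge> 2 \<Longrightarrow> q dvd poly ((pderiv ^^ k) (cheb n)) x"
proof (induction k rule: less_induct)
  case (less k)
  let ?D = "\<lambda>j. poly ((pderiv ^^ j) (cheb n)) x"
  obtain j where k: "k = j + 2"
    using less.prems le_Suc_ex by (metis add.commute)
  have n: "q dvd int n^2 - 1"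
    using cheb_fixed_point_cong[OF cop fixed deriv] by (simp add: cong_iff_dvd_diff)
  have "q dvd (1 - x^2) * ?D (j + 2)"
  proof (cases "j \<le> 1")
    case True
    then consider "j = 0" | "j = 1"
      by linarith
    then show ?thesis
    proof cases
      case 1
      have "(1 - x^2) * ?D (j + 2) = x * (?D 1 - 1) - int n^2 * (?D 0 - x) - x * (int n^2 - 1)"
        using poly_higher_pderiv_cheb_ode[of x 0 n] 1 by (simp add: algebra_simps)
      moreover have "q dvd ?D 1 - 1" and "q dvd ?D 0 - x"
        using fixed deriv by (simp_all add: cong_iff_dvd_diff)
      ultimately show ?thesis
        using n by simp
    next
      case 2
      have "(1 - x^2) * ?D (j + 2) = 3 * x * ?D 2 - (int n^2 - 1) * ?D 1"
        using poly_higher_pderiv_cheb_ode[of x 1 n] 2 by (simp add: algebra_simps numeral_3_eq_3 numeral_2_eq_2)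
      moreover have "q dvd ?D 2"
        using less.IH[of 2] 2 k by simp
      ultimately show ?thesis
        using n by simp
    qed
  next
    case False
    have "q dvd ?D (j + 1)" and "q dvd ?D j"
      using less.IH[of "j + 1"] less.IH[of j] False k by simp_all
    then show ?thesis
      unfolding poly_higher_pderiv_cheb_ode by simp
  qed
  then show ?case
    using cop k by (simp add: coprime_dvd_mult_right_iff coprime_commute)
qed

lemma cheb_higher_pderiv_rec_at_pm_one:
  assumes s: "s^2 = 1"
  shows "of_nat (2*k+1) * poly ((pderiv ^^ (k+1)) (cheb n)) s =
    s * (int n^2 - int k^2) * poly ((pderiv ^^ k) (cheb n)) s"
proof -
  let ?D = "\<lambda>j. poly ((pderiv ^^ j) (cheb n)) s"
  have ode: "of_nat (2*k+1) * s * ?D (k+1) = (int n^2 - int k^2) * ?D k"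
    using poly_higher_pderiv_cheb_ode[of s k n] s by simp
  have "of_nat (2*k+1) * ?D (k+1) = (s * s) * (of_nat (2*k+1) * ?D (k+1))"
    using s by (simp add: power2_eq_square)
  also have "\<dots> = s * (of_nat (2*k+1) * s * ?D (k+1))"
    by (simp only: mult_ac)
  finally show ?thesis
    unfolding ode by (simp only: mult_ac)
qed

lemma odd_prod_mult_higher_pderiv_cheb_at_pm_one:
  assumes s: "s^2 = 1"
  shows "(\<Prod>j<m. of_nat (2*j+1)) * poly ((pderiv ^^ m) (cheb n)) s =
    s^m * (\<Prod>j<m. int n^2 - int j^2) * poly (cheb n) s"
proof (induction m)
  case (Suc m)
  have "(\<Prod>j<Suc m. of_nat (2*j+1)) * poly ((pderiv ^^ Suc m) (cheb n)) s =
      (\<Prod>j<m. of_nat (2*j+1)) * (of_nat (2*m+1) * poly ((pderiv ^^ (m+1)) (cheb n)) s)"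
    by (simp add: algebra_simps)
  also have "\<dots> = s * (int n^2 - int m^2) * ((\<Prod>j<m. of_nat (2*j+1)) * poly ((pderiv ^^ m) (cheb n)) s)"
    unfolding cheb_higher_pderiv_rec_at_pm_one[OF s] by (simp add: algebra_simps)
  also have "\<dots> = s^Suc m * (\<Prod>j<Suc m. int n^2 - int j^2) * poly (cheb n) s"
    unfolding Suc.IH by (simp add: algebra_simps)
  finally show ?case .
qed simp

lemma cheb_taylor_coeff_dvd_at_pm_one:
  fixes p :: nat
  assumes p: "prime p" "p > 3" and s: "s^2 = 1" and n: "[int n^2 = 1] (mod int p ^ e)" and m: "m \<ge> 2"
  shows "int p ^ (e + 2) dvd coeff (pcompose (cheb n) [:s, int p:]) m"
proof -
  let ?c = "coeff (pcompose (cheb n) [:s, int p:]) m"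
  have "int n^2 - int 1^2 dvd (\<Prod>j<m. int n^2 - int j^2)"
    using m by (intro dvd_prodI) simp_all
  then have "int p ^ e dvd (\<Prod>j<m. int n^2 - int j^2)"
    using n by (simp add: cong_iff_dvd_diff cong_sym_eq dvd_trans)
  then have "int p ^ e * int p ^ m dvd (2^m * s^m * poly (cheb n) s * (\<Prod>j<m. int n^2 - int j^2)) * int p ^ m"
    by (intro mult_dvd_mono) simp_all
  also have "\<dots> = fact (2*m) * ?c"
  proof -
    have "fact (2*m) * ?c = 2^m * (\<Prod>j<m. of_nat (2*j+1)) * (fact m * ?c)"
      unfolding fact_double_int by (simp add: algebra_simps)
    also have "\<dots> = int p ^ m * 2^m * ((\<Prod>j<m. of_nat (2*j+1)) * poly ((pderiv ^^ m) (cheb n)) s)"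
      unfolding fact_mult_coeff_pcompose_linear by (simp add: algebra_simps)
    finally show ?thesis
      unfolding odd_prod_mult_higher_pderiv_cheb_at_pm_one[OF s] by (simp add: algebra_simps)
  qed
  finally show ?thesis
    using prime_power_dvd_of_fact_mult[OF p m, of "2*m" e] m by (simp add: power_add)
qed

lemma cheb_taylor_coeff_dvd_at_fixed_point:
  fixes p :: nat
  assumes p: "prime p" "p > 3" and not_dvd: "\<not> int p dvd 1 - x^2"
    and fixed: "[poly (cheb n) x = x] (mod int p ^ w)"
    and deriv: "[poly (pderiv (cheb n)) x = 1] (mod int p ^ w)"
    and m: "m \<ge> 2"
  shows "int p ^ (w + 2) dvd coeff (pcompose (cheb n) [:x, int p:]) m"
proof -
  have "coprime (int p) (1 - x^2)"
    using p(1) not_dvd by (simp add: prime_imp_coprime)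
  then have "coprime (1 - x^2) (int p ^ w)"
    by (simp add: coprime_commute)
  then have "int p ^ w dvd poly ((pderiv ^^ m) (cheb n)) x"
    using cheb_higher_pderiv_dvd_at_fixed_point[OF _ fixed deriv m] by blast
  then have "int p ^ w * int p ^ m dvd poly ((pderiv ^^ m) (cheb n)) x * int p ^ m"
    by (rule mult_dvd_mono) simp
  then have "int p ^ (w + m) dvd fact m * coeff (pcompose (cheb n) [:x, int p:]) m"
    by (simp add: fact_mult_coeff_pcompose_linear power_add mult.commute)
  then show ?thesis
    using prime_power_dvd_of_fact_mult[OF p m, of m w] m by simp
qed

lemma cheb_pderiv_cong_near_pm_one:
  fixes p :: nat
  assumes p: "prime p" "p > 3" and s: "s^2 = 1" and at_s: "poly (pderiv (cheb n)) s = int n^2"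
    and deriv: "[poly (pderiv (cheb n)) (s + t * int p) = 1] (mod int p ^ w)"
  shows "[int n^2 = 1] (mod int p ^ w)"
proof -
  have step: "[int n^2 = 1] (mod int p ^ Suc e)"
    if e: "[int n^2 = 1] (mod int p ^ e)" and "e < w" for e
  proof -
    have "\<forall>j\<ge>2. int p ^ (e + 2) dvd coeff (pcompose (cheb n) [:s, int p:]) j"
      using cheb_taylor_coeff_dvd_at_pm_one[OF p s e] by simp
    from pcompose_linear_shift_dvd(2)[OF this, of t]
    have shifted: "[int p * poly (pderiv (cheb n)) (s + t * int p) = int p * int n^2] (mod int p * int p ^ Suc e)"
      by (simp add: at_s)
    have "[poly (pderiv (cheb n)) (s + t * int p) = int n^2] (mod int p ^ Suc e)"
      using p(1) by (intro cong_cmult_left_cancel[OF _ shifted]) simp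
    moreover have "[poly (pderiv (cheb n)) (s + t * int p) = 1] (mod int p ^ Suc e)"
      using deriv \<open>e < w\<close> by (elim cong_dvd_modulus) (simp add: le_imp_power_dvd del: power_Suc)
    ultimately show ?thesis
      by (metis cong_sym cong_trans)
  qed
  have "e \<le> w \<Longrightarrow> [int n^2 = 1] (mod int p ^ e)" for e
  proof (induction e)
    case (Suc e)
    then show ?case
      using step[of e] by simp
  qed simp
  then show ?thesis
    by simp
qed

lemma cheb_taylor_coeff_dvd_near_pm_one:
  fixes p :: nat
  assumes p: "prime p" "p > 3" and s: "s^2 = 1" and at_s: "poly (pderiv (cheb n)) s = int n^2"
    and deriv: "[poly (pderiv (cheb n)) (s + t * int p) = 1] (mod int p ^ w)"
  shows "\<forall>m\<ge>2. int p ^ (w + 2) dvd coeff (pcompose (cheb n) [:s + t * int p, int p:]) m"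
proof -
  have "[int n^2 = 1] (mod int p ^ w)"
    by (rule cheb_pderiv_cong_near_pm_one[OF p s at_s deriv])
  then have "\<forall>m\<ge>2. int p ^ (w + 2) dvd coeff (pcompose (cheb n) [:s, int p:]) m"
    using cheb_taylor_coeff_dvd_at_pm_one[OF p s] by simp
  then show ?thesis
    by (rule pcompose_linear_shift_dvd(1))
qed

lemma cheb_taylor_coeff_dvd:
  fixes p :: nat
  assumes p: "prime p" "p > 3" and n: "odd n" and x: "0 \<le> x" "x \<le> int p - 1"
    and fixed: "[poly (cheb n) x = x] (mod int p ^ w)"
    and deriv: "[poly (pderiv (cheb n)) x = 1] (mod int p ^ w)"
  shows "\<forall>m\<ge>2. int p ^ (w + 2) dvd coeff (pcompose (cheb n) [:x, int p:]) m"
proof (cases "int p dvd 1 - x^2")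
  case False
  then show ?thesis
    using cheb_taylor_coeff_dvd_at_fixed_point[OF p False fixed deriv] by blast
next
  case True
  have "prime (int p)"
    using p(1) by simp
  moreover have "int p dvd (1 - x) * (1 + x)"
    using True by (simp add: power2_eq_square algebra_simps)
  ultimately consider "int p dvd 1 - x" | "int p dvd 1 + x"
    by (auto simp: prime_dvd_mult_iff)
  then show ?thesis
  proof cases
    case 1
    have "x = 1"
    proof (rule ccontr)
      assume "x \<noteq> 1"
      then have "\<bar>int p\<bar> \<le> \<bar>1 - x\<bar>"
        using dvd_imp_le_int[OF _ 1] by simp
      then show False
        using x p(2) by linarith
    qed
    then show ?thesis
      using cheb_taylor_coeff_dvd_near_pm_one[OF p, of 1 n 0 w] deriv poly_pderiv_cheb_one[of n] by simp
  next
    case 2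
    moreover have "1 + x \<noteq> 0"
      using x(1) by simp
    ultimately have "\<bar>int p\<bar> \<le> \<bar>1 + x\<bar>"
      using dvd_imp_le_int by blast
    then have "x = -1 + 1 * int p"
      using x by linarith
    then show ?thesis
      using cheb_taylor_coeff_dvd_near_pm_one[OF p, of "-1" n 1 w] deriv poly_pderiv_cheb_minus_one[of n] n by simp
  qed
qed

theorem lemma5:
  fixes p n w h :: nat and x :: int
  assumes "prime p" and "p > 3" and "n > 1"
    and "coprime n p" and "coprime n (p^2 - 1)"
    and "w > 0" and "0 \<le> x" and "x \<le> int p - 1"
    and "[poly (cheb n) x = x] (mod (int p ^ w))"
    and "[poly (cheb_deriv 1 n) x = 1] (mod (int p ^ w))"
  shows "[poly (cheb_deriv 1 n) (x + int h * int p) = poly (cheb_deriv 1 n) x]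
            (mod (int p ^ (w + 1)))
         \<and> (\<forall>m::nat. m \<ge> 2 \<longrightarrow>
              [(poly (cheb_deriv m n) (x + int h * int p) div fact m) * int p ^ m = 0]
                (mod (int p ^ (w + 2))))"
proof -
  have "odd p"
    using prime_odd_nat[OF assms(1)] assms(2) by simp
  then have "odd n"
    using odd_if_coprime_square_minus_one assms(5) by blast
  then have at_x: "\<forall>m\<ge>2. int p ^ (w + 2) dvd coeff (pcompose (cheb n) [:x, int p:]) m"
    using cheb_taylor_coeff_dvd assms(1,2,7-10) by (simp add: cheb_deriv_def)
  have shifted: "[int p * poly (pderiv (cheb n)) (x + int h * int p) = int p * poly (pderiv (cheb n)) x]
      (mod int p * int p ^ (w + 1))"
    using pcompose_linear_shift_dvd(2)[OF at_x, of "int h"] by simp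
  have "[poly (pderiv (cheb n)) (x + int h * int p) = poly (pderiv (cheb n)) x] (mod int p ^ (w + 1))"
    using assms(1) by (intro cong_cmult_left_cancel[OF _ shifted]) simp
  then have "[poly (cheb_deriv 1 n) (x + int h * int p) = poly (cheb_deriv 1 n) x] (mod int p ^ (w + 1))"
    by (simp add: cheb_deriv_def)
  moreover have "[(poly (cheb_deriv m n) (x + int h * int p) div fact m) * int p ^ m = 0] (mod int p ^ (w + 2))"
    if "m \<ge> 2" for m
    using pcompose_linear_shift_dvd(1)[OF at_x, of "int h"] that
    by (simp add: cong_0_iff cheb_deriv_def coeff_pcompose_linear_int)
  ultimately show ?thesis
    by blast
qed

end
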